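(* Let $G$ be a connected graph of order $n\geq 2$ and let $H$ be a graph with $k\geq 1$ connected components $H_1,\dots,H_k$. Then $$\max\{\chi_L(H_t+K_1)\mid 1\leq t\leq k\}\ \leq\ \chi_L(G\odot H)\ \leq\ \chi_L(G)+\sum_{t=1}^{k}\bigl(\chi_L(H_t+K_1)-1\bigr).$$
   Context: All graphs are finite and simple. A $k$-coloring of a connected graph $G$ is a map $c:V(G)\to\{1,\dots,k\}$ with $c(u)\neq c(v)$ for adjacent $u,v$; it induces the partition $\Pi=\{C_1,\dots,C_k\}$ into color classes $C_i=c^{-1}(i)$. The color code of $v$ is $c_\Pi(v)=(d(v,C_1),\dots,d(v,C_k))$ with $d(v,C_i)=\min\{d(v,x): x\in C_i\}$ (graph distance). $c$ is a locating coloring if distinct vertices have distinct color codes; the locating-chromatic number $\chi_L(G)$ is the least $k$ for which a locating $k$-coloring exists. The corona product $G\odot H$ of a graph $G$ with vertex set $\{a_1,\dots,a_n\}$ and a graph $H$ is obtained from one copy of $G$ and $n$ disjoint copies of $H$ by joining $a_i$ to every vertex of the $i$-th copy of $H$. For a graph $F$, $F+K_1$ denotes the join of $F$ with a single new vertex adjacent to all vertices of $F$. *)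

theory Defs
  imports Main
begin

definition simple_graph :: "'a set \<Rightarrow> ('a \<Rightarrow> 'a \<Rightarrow> bool) \<Rightarrow> bool" where
  "simple_graph V E \<longleftrightarrow> finite V \<and> (\<forall>u v. E u v \<longrightarrow> u \<in> V \<and> v \<in> V)
     \<and> (\<forall>u v. E u v \<longrightarrow> E v u) \<and> (\<forall>v. \<not> E v v)"

inductive reach :: "('a \<Rightarrow> 'a \<Rightarrow> bool) \<Rightarrow> 'a \<Rightarrow> 'a \<Rightarrow> nat \<Rightarrow> bool" for E where
  reach_refl: "reach E u u 0"
| reach_step: "E u w \<Longrightarrow> reach E w v n \<Longrightarrow> reach E u v (Suc n)"

definition gdist :: "('a \<Rightarrow> 'a \<Rightarrow> bool) \<Rightarrow> 'a \<Rightarrow> 'a \<Rightarrow> nat" where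
  "gdist E u v = (LEAST n. reach E u v n)"

definition connected_graph :: "'a set \<Rightarrow> ('a \<Rightarrow> 'a \<Rightarrow> bool) \<Rightarrow> bool" where
  "connected_graph V E \<longleftrightarrow> simple_graph V E \<and> V \<noteq> {} \<and>
     (\<forall>u\<in>V. \<forall>v\<in>V. \<exists>n. reach E u v n)"

definition dist_class :: "'a set \<Rightarrow> ('a \<Rightarrow> 'a \<Rightarrow> bool) \<Rightarrow> ('a \<Rightarrow> nat) \<Rightarrow> 'a \<Rightarrow> nat \<Rightarrow> nat" where
  "dist_class V E c v i = (LEAST n. \<exists>x\<in>V. c x = i \<and> gdist E v x = n)"

text \<open>A k-colouring (all k colour classes nonempty, so that it induces a partition
  into k classes) which is proper.\<close>
definition coloring :: "'a set \<Rightarrow> ('a \<Rightarrow> 'a \<Rightarrow> bool) \<Rightarrow> ('a \<Rightarrow> nat) \<Rightarrow> nat \<Rightarrow> bool" where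
  "coloring V E c k \<longleftrightarrow> c ` V = {1..k} \<and> (\<forall>u\<in>V. \<forall>v\<in>V. E u v \<longrightarrow> c u \<noteq> c v)"

definition locating_coloring :: "'a set \<Rightarrow> ('a \<Rightarrow> 'a \<Rightarrow> bool) \<Rightarrow> ('a \<Rightarrow> nat) \<Rightarrow> nat \<Rightarrow> bool" where
  "locating_coloring V E c k \<longleftrightarrow> coloring V E c k \<and>
     (\<forall>u\<in>V. \<forall>v\<in>V. u \<noteq> v \<longrightarrow>
        (\<exists>i\<in>{1..k}. dist_class V E c u i \<noteq> dist_class V E c v i))"

definition chi_L :: "'a set \<Rightarrow> ('a \<Rightarrow> 'a \<Rightarrow> bool) \<Rightarrow> nat" where
  "chi_L V E = (LEAST k. \<exists>c. locating_coloring V E c k)"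

definition components :: "'a set \<Rightarrow> ('a \<Rightarrow> 'a \<Rightarrow> bool) \<Rightarrow> 'a set set" where
  "components V E = {{w\<in>V. \<exists>n. reach E v w n} | v. v \<in> V}"

definition induced :: "('a \<Rightarrow> 'a \<Rightarrow> bool) \<Rightarrow> 'a set \<Rightarrow> 'a \<Rightarrow> 'a \<Rightarrow> bool" where
  "induced E S u v \<longleftrightarrow> E u v \<and> u \<in> S \<and> v \<in> S"

text \<open>F + K_1: new apex vertex None joined to all (Some) vertices of F.\<close>
definition coneV :: "'a set \<Rightarrow> 'a option set" where
  "coneV V = insert None (Some ` V)"

fun coneE :: "'a set \<Rightarrow> ('a \<Rightarrow> 'a \<Rightarrow> bool) \<Rightarrow> 'a option \<Rightarrow> 'a option \<Rightarrow> bool" where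
  "coneE V E (Some a) (Some b) = E a b"
| "coneE V E (Some a) None = (a \<in> V)"
| "coneE V E None (Some b) = (b \<in> V)"
| "coneE V E None None = False"

text \<open>Corona product G \<odot> H: vertex Inl a is a of G, Inr (a,h) is h in the copy of H at a.\<close>
definition coronaV :: "'a set \<Rightarrow> 'b set \<Rightarrow> ('a + 'a \<times> 'b) set" where
  "coronaV VG VH = Inl ` VG \<union> Inr ` (VG \<times> VH)"

fun coronaE :: "'a set \<Rightarrow> ('a \<Rightarrow> 'a \<Rightarrow> bool) \<Rightarrow> 'b set \<Rightarrow> ('b \<Rightarrow> 'b \<Rightarrow> bool)
    \<Rightarrow> ('a + 'a \<times> 'b) \<Rightarrow> ('a + 'a \<times> 'b) \<Rightarrow> bool" where
  "coronaE VG EG VH EH (Inl a) (Inl b) = EG a b"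
| "coronaE VG EG VH EH (Inl a) (Inr (b, h)) = (a = b \<and> a \<in> VG \<and> h \<in> VH)"
| "coronaE VG EG VH EH (Inr (b, h)) (Inl a) = (a = b \<and> a \<in> VG \<and> h \<in> VH)"
| "coronaE VG EG VH EH (Inr (a, h)) (Inr (b, h')) = (a = b \<and> a \<in> VG \<and> EH h h')"

end

theory Submission
  imports Defs "HOL-Library.Nat_Bijection"
begin

text \<open>The vertex \<open>a\<close> of \<open>G\<close> together with its copy of a component \<open>C\<close> of \<open>H\<close> spans an
  isometric copy of \<open>C + K\<^sub>1\<close> in \<open>G \<odot> H\<close>. Since \<open>C + K\<^sub>1\<close> has diameter at most 2, every other
  vertex is at distance at least 2 from the copy of \<open>C\<close>, and every walk leaving the copy of \<open>C\<close>
  passes through \<open>a\<close>, the colour codes of the vertices of the copy of \<open>C\<close> are those of the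
  restricted colouring, except at colours absent from the copy, where they are all one more than
  at \<open>a\<close>. So a locating colouring of \<open>G \<odot> H\<close> restricts to one of \<open>C + K\<^sub>1\<close>: the lower bound.
  For the upper bound, colour \<open>G\<close> by an optimal locating colouring and every copy of \<open>C\<close> by an
  optimal locating colouring of \<open>C + K\<^sub>1\<close>, moved into a palette private to \<open>C\<close>. Vertices over different vertices of \<open>G\<close> are then
  separated by the colouring of \<open>G\<close>, and vertices of one copy of \<open>C\<close> by that of \<open>C + K\<^sub>1\<close>,
  whose apex colour cannot be the separating one since they are all adjacent to the apex.\<close>

section \<open>Walks and distances\<close>

lemma reach_trans: "reach E u v m \<Longrightarrow> reach E v w n \<Longrightarrow> reach E u w (m + n)"
  by (induction rule: reach.induct) (auto intro: reach_step)

lemma reach_snoc: "reach E u v n \<Longrightarrow> E v w \<Longrightarrow> reach E u w (Suc n)"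
  using reach_trans[of E u v n w 1] by (simp add: reach_step reach_refl)

lemma reach_sym: "reach E u v n \<Longrightarrow> (\<And>x y. E x y \<Longrightarrow> E y x) \<Longrightarrow> reach E v u n"
  by (induction rule: reach.induct) (auto intro: reach_refl reach_snoc)

lemma reach_edge: "E u v \<Longrightarrow> reach E u v 1"
  using reach_step[OF _ reach_refl] by simp

lemma reach_zero_eq: "reach E u v 0 \<Longrightarrow> u = v"
  by (erule reach.cases) auto

lemma reach_one_edge: "reach E u v 1 \<Longrightarrow> E u v"
  by (erule reach.cases) (auto dest: reach_zero_eq)

lemma gdist_le: "reach E u v n \<Longrightarrow> gdist E u v \<le> n"
  unfolding gdist_def by (rule Least_le)

lemma reach_gdist: "reach E u v n \<Longrightarrow> reach E u v (gdist E u v)"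
  unfolding gdist_def by (rule LeastI)

lemma gdist_self [simp]: "gdist E u u = 0"
  using gdist_le[OF reach_refl, of E u] by simp

lemma gdist_edge_le: "E u v \<Longrightarrow> gdist E u v \<le> 1"
  by (rule gdist_le[OF reach_edge])

lemma gdist_pos: "reach E u v n \<Longrightarrow> u \<noteq> v \<Longrightarrow> 1 \<le> gdist E u v"
  using reach_gdist reach_zero_eq by (metis less_one not_less)

lemma gdist_ge_2:
  assumes "reach E u v n" and "u \<noteq> v" and "\<not> E u v"
  shows "2 \<le> gdist E u v"
proof -
  have walk: "reach E u v (gdist E u v)" using reach_gdist[OF assms(1)] .
  have "gdist E u v \<noteq> 0" using walk assms(2) by (metis reach_zero_eq)
  moreover have "gdist E u v \<noteq> 1" using walk assms(3) by (metis reach_one_edge)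
  ultimately show ?thesis by linarith
qed

lemma reach_map:
  assumes "reach E u v n" and "\<And>x y. E x y \<Longrightarrow> E' (f x) (f y) \<or> f x = f y"
  shows "\<exists>m\<le>n. reach E' (f u) (f v) m"
  using assms(1)
proof (induction rule: reach.induct)
  case (reach_refl u)
  then show ?case by (auto intro: reach.reach_refl)
next
  case (reach_step u w v n)
  then obtain m where m: "m \<le> n" "reach E' (f w) (f v) m" by auto
  show ?case
  proof (cases "f u = f w")
    case True
    then show ?thesis using m by (metis le_SucI)
  next
    case False
    then have "E' (f u) (f w)" using assms(2) reach_step by blast
    then show ?thesis using m by (meson Suc_le_mono reach.reach_step)
  qed
qed

lemma gdist_map_le:
  assumes "reach E u v n" and "\<And>x y. E x y \<Longrightarrow> E' (f x) (f y) \<or> f x = f y"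
  shows "gdist E' (f u) (f v) \<le> gdist E u v"
proof -
  obtain m where "m \<le> gdist E u v" "reach E' (f u) (f v) m"
    using reach_map[where E'=E' and f=f, OF reach_gdist[OF assms(1)] assms(2)] by blast
  then show ?thesis using gdist_le[of E' "f u" "f v" m] by linarith
qed

lemma connected_graph_reach: "connected_graph V E \<Longrightarrow> u \<in> V \<Longrightarrow> v \<in> V \<Longrightarrow> \<exists>n. reach E u v n"
  unfolding connected_graph_def by auto

lemma connected_graph_finite: "connected_graph V E \<Longrightarrow> finite V"
  unfolding connected_graph_def simple_graph_def by auto

section \<open>Distances to colour classes and locating colourings\<close>

lemma dist_class_attained:
  assumes "x0 \<in> V" "c x0 = i"
  obtains x where "x \<in> V" "c x = i" "gdist E v x = dist_class V E c v i"
    and "\<And>y. y \<in> V \<Longrightarrow> c y = i \<Longrightarrow> dist_class V E c v i \<le> gdist E v y"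
proof -
  let ?P = "\<lambda>n. \<exists>x\<in>V. c x = i \<and> gdist E v x = n"
  have "?P (gdist E v x0)" using assms by auto
  then have "?P (Least ?P)" by (rule LeastI)
  moreover have "Least ?P \<le> gdist E v y" if "y \<in> V" "c y = i" for y
    using that by (intro Least_le) auto
  ultimately show ?thesis using that unfolding dist_class_def by auto
qed

lemma dist_class_eqI:
  assumes "x0 \<in> V" "c x0 = i" "gdist E v x0 = n"
    and "\<And>y. y \<in> V \<Longrightarrow> c y = i \<Longrightarrow> n \<le> gdist E v y"
  shows "dist_class V E c v i = n"
  unfolding dist_class_def using assms by (intro Least_equality) auto

lemma dist_class_cong:
  assumes "\<And>x. x \<in> V \<Longrightarrow> c' x = j \<longleftrightarrow> c x = i"
  shows "dist_class V E c' v j = dist_class V E c v i"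
proof -
  have "(\<lambda>n. \<exists>x\<in>V. c' x = j \<and> gdist E v x = n) = (\<lambda>n. \<exists>x\<in>V. c x = i \<and> gdist E v x = n)"
    using assms by auto
  then show ?thesis unfolding dist_class_def by simp
qed

lemma dist_class_own_color_neq:
  assumes "connected_graph V E" "u \<in> V" "v \<in> V" "c u \<noteq> c v"
  shows "dist_class V E c u (c u) \<noteq> dist_class V E c v (c u)"
proof -
  have "dist_class V E c u (c u) = 0"
    using assms by (intro dist_class_eqI[of u]) auto
  moreover obtain x where x: "x \<in> V" "c x = c u" "gdist E v x = dist_class V E c v (c u)"
    using dist_class_attained[of u V c "c u" E v] assms(2) by blast
  moreover obtain n where "reach E v x n" using connected_graph_reach assms x by metis
  then have "1 \<le> gdist E v x" using x assms by (intro gdist_pos) auto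
  ultimately show ?thesis by auto
qed

definition locating_on :: "'a set \<Rightarrow> ('a \<Rightarrow> 'a \<Rightarrow> bool) \<Rightarrow> ('a \<Rightarrow> nat) \<Rightarrow> bool" where
  "locating_on V E c \<longleftrightarrow> (\<forall>u\<in>V. \<forall>v\<in>V. E u v \<longrightarrow> c u \<noteq> c v) \<and>
     (\<forall>u\<in>V. \<forall>v\<in>V. u \<noteq> v \<longrightarrow> (\<exists>i\<in>c ` V. dist_class V E c u i \<noteq> dist_class V E c v i))"

lemma locating_on_proper: "locating_on V E c \<Longrightarrow> u \<in> V \<Longrightarrow> v \<in> V \<Longrightarrow> E u v \<Longrightarrow> c u \<noteq> c v"
  unfolding locating_on_def by blast

lemma locating_on_separates:
  "locating_on V E c \<Longrightarrow> u \<in> V \<Longrightarrow> v \<in> V \<Longrightarrow> u \<noteq> v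
   \<Longrightarrow> \<exists>i\<in>c ` V. dist_class V E c u i \<noteq> dist_class V E c v i"
  unfolding locating_on_def by blast

lemma locating_coloring_imp_locating_on:
  "locating_coloring V E c k \<Longrightarrow> locating_on V E c"
  unfolding locating_coloring_def coloring_def locating_on_def by auto

lemma locating_on_relabel:
  assumes "finite V" "locating_on V E c"
  shows "\<exists>c'. locating_coloring V E c' (card (c ` V))"
proof -
  let ?S = "c ` V"
  obtain g where g: "bij_betw g ?S {1..card ?S}"
    using finite_same_card_bij[of ?S "{1..card ?S}"] assms by auto
  have inj: "inj_on g ?S" using g bij_betw_def by blast
  have dc: "dist_class V E (g \<circ> c) w (g i) = dist_class V E c w i" if "i \<in> ?S" for w i
    using inj that by (intro dist_class_cong) (auto dest: inj_onD)
  have "locating_coloring V E (g \<circ> c) (card ?S)"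
    unfolding locating_coloring_def coloring_def
  proof (intro conjI ballI impI)
    show "(g \<circ> c) ` V = {1..card ?S}" using g by (simp add: bij_betw_def image_comp)
  next
    fix u v assume "u \<in> V" "v \<in> V" "E u v"
    then show "(g \<circ> c) u \<noteq> (g \<circ> c) v" using locating_on_proper[OF assms(2)] inj
      by (auto dest: inj_onD)
  next
    fix u v assume "u \<in> V" "v \<in> V" "u \<noteq> v"
    then obtain i where i: "i \<in> ?S" "dist_class V E c u i \<noteq> dist_class V E c v i"
      using locating_on_separates[OF assms(2)] by blast
    have "g i \<in> {1..card ?S}" using g i(1) bij_betwE by blast
    then show "\<exists>j\<in>{1..card ?S}. dist_class V E (g \<circ> c) u j \<noteq> dist_class V E (g \<circ> c) v j"
      using dc i by metis
  qed
  then show ?thesis by blast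
qed

lemma chi_L_le_card_image: "finite V \<Longrightarrow> locating_on V E c \<Longrightarrow> chi_L V E \<le> card (c ` V)"
  unfolding chi_L_def by (drule (1) locating_on_relabel) (blast intro: Least_le)

lemma locating_coloring_chi_L:
  assumes "connected_graph V E"
  shows "\<exists>c. locating_coloring V E c (chi_L V E)"
proof -
  have fin: "finite V" using assms by (rule connected_graph_finite)
  obtain f :: "_ \<Rightarrow> nat" where f: "inj_on f V"
    using finite_imp_inj_to_nat_seg[OF fin] by auto
  have "locating_on V E f" unfolding locating_on_def
  proof (intro conjI ballI impI)
    fix u v assume "u \<in> V" "v \<in> V" "E u v"
    moreover have "\<not> E u u" using assms unfolding connected_graph_def simple_graph_def by auto
    ultimately show "f u \<noteq> f v" using f by (auto dest: inj_onD)
  next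
    fix u v assume "u \<in> V" "v \<in> V" "u \<noteq> v"
    then show "\<exists>i\<in>f ` V. dist_class V E f u i \<noteq> dist_class V E f v i"
      using dist_class_own_color_neq[OF assms, of u v f] f by (auto dest: inj_onD)
  qed
  then have "\<exists>c. locating_coloring V E c (card (f ` V))" using locating_on_relabel fin by blast
  then show ?thesis unfolding chi_L_def by (rule LeastI)
qed

section \<open>The corona product\<close>

lemma sum_pair_cases [case_names Inl Inr]:
  obtains a where "x = Inl a" | a h where "x = Inr (a, h)"
  by (cases x) auto

locale corona =
  fixes VG :: "'a set" and EG :: "'a \<Rightarrow> 'a \<Rightarrow> bool"
    and VH :: "'b set" and EH :: "'b \<Rightarrow> 'b \<Rightarrow> bool"
  assumes G: "connected_graph VG EG" and H: "simple_graph VH EH"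
begin

abbreviation "Vc \<equiv> coronaV VG VH"
abbreviation "Ec \<equiv> coronaE VG EG VH EH"
abbreviation "comps \<equiv> components VH EH"
abbreviation "Econe C \<equiv> coneE C (induced EH C)"

lemma finite_VG: "finite VG" and EG_in: "EG u v \<Longrightarrow> u \<in> VG \<and> v \<in> VG"
  and EG_sym: "EG u v \<Longrightarrow> EG v u" and EG_irrefl: "\<not> EG u u" and VG_nonempty: "VG \<noteq> {}"
  using G unfolding connected_graph_def simple_graph_def by auto

lemma finite_VH: "finite VH" and EH_in: "EH u v \<Longrightarrow> u \<in> VH \<and> v \<in> VH"
  and EH_sym: "EH u v \<Longrightarrow> EH v u" and EH_irrefl: "\<not> EH u u"
  using H unfolding simple_graph_def by auto

lemma Inl_in_Vc [simp]: "Inl a \<in> Vc \<longleftrightarrow> a \<in> VG"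
  and Inr_in_Vc [simp]: "Inr (a, h) \<in> Vc \<longleftrightarrow> a \<in> VG \<and> h \<in> VH"
  by (auto simp: coronaV_def)

lemma simple_graph_corona: "simple_graph Vc Ec"
proof -
  have "u \<in> Vc \<and> v \<in> Vc" and "Ec v u" if "Ec u v" for u v
    using that by (cases u rule: sum_pair_cases; cases v rule: sum_pair_cases;
        auto dest: EG_in EG_sym EH_in EH_sym)+
  moreover have "\<not> Ec u u" for u
    by (cases u rule: sum_pair_cases) (auto simp: EG_irrefl EH_irrefl)
  ultimately show ?thesis
    unfolding simple_graph_def using finite_VG finite_VH by (auto simp: coronaV_def)
qed

lemma reach_Inl_Inl: "a \<in> VG \<Longrightarrow> b \<in> VG \<Longrightarrow> \<exists>n. reach Ec (Inl a) (Inl b) n"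
  using reach_map[of EG a b _ Ec Inl] connected_graph_reach[OF G] by fastforce

lemma reach_Inl: "x \<in> Vc \<Longrightarrow> a \<in> VG \<Longrightarrow> \<exists>n. reach Ec x (Inl a) n"
proof (cases x rule: sum_pair_cases)
  case (Inr b h)
  assume "x \<in> Vc" "a \<in> VG"
  moreover have "Ec x (Inl b)" using Inr \<open>x \<in> Vc\<close> by simp
  moreover have "b \<in> VG" using Inr \<open>x \<in> Vc\<close> by simp
  ultimately show ?thesis using Inr reach_Inl_Inl[of b a] by (blast intro: reach_step)
qed (use reach_Inl_Inl in auto)

lemma connected_graph_corona: "connected_graph Vc Ec"
  unfolding connected_graph_def
proof (intro conjI ballI)
  show "simple_graph Vc Ec" by (rule simple_graph_corona)
  show "Vc \<noteq> {}" using VG_nonempty by (auto simp: coronaV_def)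
next
  fix u v assume "u \<in> Vc" "v \<in> Vc"
  obtain a where a: "a \<in> VG" using VG_nonempty by blast
  obtain m where m: "reach Ec u (Inl a) m" using reach_Inl \<open>u \<in> Vc\<close> a by blast
  obtain n where "reach Ec v (Inl a) n" using reach_Inl \<open>v \<in> Vc\<close> a by blast
  then have "reach Ec (Inl a) v n"
    using simple_graph_corona unfolding simple_graph_def by (blast intro: reach_sym)
  then show "\<exists>n. reach Ec u v n" using reach_trans[OF m] by blast
qed

lemma reach_corona: "u \<in> Vc \<Longrightarrow> v \<in> Vc \<Longrightarrow> \<exists>n. reach Ec u v n"
  using connected_graph_corona by (rule connected_graph_reach)

lemma gdist_Inl_Inl:
  assumes "a \<in> VG" "b \<in> VG"
  shows "gdist Ec (Inl a) (Inl b) = gdist EG a b"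
proof (rule antisym)
  obtain n where "reach EG a b n" using connected_graph_reach[OF G] assms by blast
  then show "gdist Ec (Inl a) (Inl b) \<le> gdist EG a b" by (rule gdist_map_le) simp
next
  obtain n where n: "reach Ec (Inl a) (Inl b) n" using reach_Inl_Inl assms by blast
  let ?base = "\<lambda>x. case x of Inl c \<Rightarrow> c | Inr p \<Rightarrow> fst p"
  have "EG (?base x) (?base y) \<or> ?base x = ?base y" if "Ec x y" for x y
    using that by (cases x rule: sum_pair_cases; cases y rule: sum_pair_cases) auto
  then show "gdist EG a b \<le> gdist Ec (Inl a) (Inl b)"
    using gdist_map_le[of Ec "Inl a" "Inl b" n EG ?base] n by simp
qed

definition component_of :: "'b \<Rightarrow> 'b set" where
  "component_of h = {w\<in>VH. \<exists>n. reach EH h w n}"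

lemma component_of_mem: "h \<in> VH \<Longrightarrow> component_of h \<in> comps \<and> h \<in> component_of h"
  unfolding component_of_def components_def by (auto intro: reach_refl)

lemma component_eq: "C \<in> comps \<Longrightarrow> h \<in> C \<Longrightarrow> C = component_of h"
proof -
  assume C: "C \<in> comps" and h: "h \<in> C"
  then obtain v where v: "v \<in> VH" "C = {w\<in>VH. \<exists>n. reach EH v w n}"
    unfolding components_def by blast
  then obtain n where n: "reach EH v h n" using h by blast
  have "reach EH h v n" using reach_sym[OF n] EH_sym by blast
  show ?thesis
  proof
    show "C \<subseteq> component_of h"
      unfolding component_of_def v(2) using reach_trans[OF \<open>reach EH h v n\<close>] by blast
    show "component_of h \<subseteq> C" unfolding component_of_def v(2) using reach_trans[OF n] by blast
  qed
qed

lemma component_subset: "C \<in> comps \<Longrightarrow> C \<subseteq> VH"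
  unfolding components_def by auto

lemma component_closed: "C \<in> comps \<Longrightarrow> h \<in> C \<Longrightarrow> EH h h' \<Longrightarrow> h' \<in> C"
  using component_eq[of C h] reach_edge[of EH h h'] EH_in unfolding component_of_def by blast

lemma component_closed_rev: "C \<in> comps \<Longrightarrow> h' \<in> C \<Longrightarrow> EH h h' \<Longrightarrow> h \<in> C"
  using component_closed EH_sym by blast

lemma finite_components: "finite comps"
  by (rule finite_subset[of _ "Pow VH"]) (auto simp: components_def finite_VH)

lemma components_nonempty: "VH \<noteq> {} \<Longrightarrow> comps \<noteq> {}"
  unfolding components_def by auto

lemma connected_graph_cone:
  assumes C: "C \<in> comps"
  shows "connected_graph (coneV C) (Econe C)"
proof -
  have sg: "simple_graph (coneV C) (Econe C)"
  proof -
    have "finite (coneV C)"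
      using finite_subset[OF component_subset[OF C] finite_VH] by (simp add: coneV_def)
    moreover have "u \<in> coneV C \<and> v \<in> coneV C" if "Econe C u v" for u v
      using that by (cases u; cases v) (auto simp: coneV_def induced_def)
    moreover have "Econe C v u" if "Econe C u v" for u v
      using that by (cases u; cases v) (auto simp: induced_def dest: EH_sym)
    moreover have "\<not> Econe C v v" for v by (cases v) (auto simp: induced_def EH_irrefl)
    ultimately show ?thesis unfolding simple_graph_def by blast
  qed
  have to_apex: "\<exists>n. reach (Econe C) u None n" if "u \<in> coneV C" for u
  proof (cases u)
    case (Some h)
    then have "Econe C u None" using that by (auto simp: coneV_def)
    then show ?thesis by (blast intro: reach_edge)
  qed (blast intro: reach_refl)
  show ?thesis unfolding connected_graph_def
  proof (intro conjI ballI)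
    fix u v assume "u \<in> coneV C" "v \<in> coneV C"
    then obtain m n where m: "reach (Econe C) u None m" and n: "reach (Econe C) v None n"
      using to_apex by blast
    have "reach (Econe C) None v n"
      using sg unfolding simple_graph_def by (blast intro: reach_sym[OF n])
    then show "\<exists>n. reach (Econe C) u v n" using reach_trans[OF m] by blast
  qed (use sg in \<open>auto simp: coneV_def\<close>)
qed

lemma gdist_cone_le_2:
  assumes "u \<in> coneV C" "v \<in> coneV C"
  shows "gdist (Econe C) u v \<le> 2"
proof -
  consider "u = v" | "Econe C u v" | "Econe C u None" "Econe C None v"
    using assms by (cases u; cases v) (auto simp: coneV_def)
  then show ?thesis
  proof cases
    case 1
    then show ?thesis by simp
  next
    case 2
    then show ?thesis using gdist_edge_le[of "Econe C" u v] by linarith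
  next
    case 3
    then have "reach (Econe C) u v (Suc 1)" by (blast intro: reach_step reach_edge)
    then show ?thesis using gdist_le by fastforce
  qed
qed

definition cone_emb :: "'a \<Rightarrow> 'b option \<Rightarrow> 'a + 'a \<times> 'b" where
  "cone_emb a x = (case x of None \<Rightarrow> Inl a | Some h \<Rightarrow> Inr (a, h))"

definition cone_retr :: "'a \<Rightarrow> 'b set \<Rightarrow> 'a + 'a \<times> 'b \<Rightarrow> 'b option" where
  "cone_retr a C x =
     (case x of Inl b \<Rightarrow> None | Inr (b, h) \<Rightarrow> if b = a \<and> h \<in> C then Some h else None)"

lemma cone_emb_simps [simp]: "cone_emb a None = Inl a" "cone_emb a (Some h) = Inr (a, h)"
  by (simp_all add: cone_emb_def)

lemma cone_emb_in_Vc: "a \<in> VG \<Longrightarrow> C \<in> comps \<Longrightarrow> u \<in> coneV C \<Longrightarrow> cone_emb a u \<in> Vc"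
  by (force simp: coneV_def dest: component_subset)

lemma cone_emb_edge:
  "a \<in> VG \<Longrightarrow> C \<in> comps \<Longrightarrow> Econe C x y \<Longrightarrow> Ec (cone_emb a x) (cone_emb a y)"
  using component_subset by (cases x; cases y) (auto simp: induced_def)

lemma cone_retr_edge:
  assumes C: "C \<in> comps" and "Ec x y"
  shows "Econe C (cone_retr a C x) (cone_retr a C y) \<or> cone_retr a C x = cone_retr a C y"
proof (cases x rule: sum_pair_cases)
  case (Inr b h)
  show ?thesis
  proof (cases y rule: sum_pair_cases)
    case (Inr b' h')
    with \<open>x = Inr (b, h)\<close> \<open>Ec x y\<close> have "b' = b" "EH h h'" by auto
    moreover have "h \<in> C \<longleftrightarrow> h' \<in> C"
      using \<open>EH h h'\<close> component_closed[OF C] component_closed_rev[OF C] by blast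
    ultimately show ?thesis
      using \<open>x = Inr (b, h)\<close> Inr by (auto simp: cone_retr_def induced_def)
  qed (use Inr \<open>Ec x y\<close> in \<open>auto simp: cone_retr_def\<close>)
qed (cases y rule: sum_pair_cases; use \<open>Ec x y\<close> in \<open>auto simp: cone_retr_def\<close>)

lemma gdist_cone_emb:
  assumes a: "a \<in> VG" and C: "C \<in> comps" and u: "u \<in> coneV C" and v: "v \<in> coneV C"
  shows "gdist Ec (cone_emb a u) (cone_emb a v) = gdist (Econe C) u v"
proof (rule antisym)
  obtain n where "reach (Econe C) u v n"
    using connected_graph_reach[OF connected_graph_cone[OF C] u v] by blast
  then show "gdist Ec (cone_emb a u) (cone_emb a v) \<le> gdist (Econe C) u v"
    by (rule gdist_map_le) (use cone_emb_edge[OF a C] in blast)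
next
  obtain n where "reach Ec (cone_emb a u) (cone_emb a v) n"
    using reach_corona cone_emb_in_Vc a C u v by blast
  then have "gdist (Econe C) (cone_retr a C (cone_emb a u)) (cone_retr a C (cone_emb a v))
      \<le> gdist Ec (cone_emb a u) (cone_emb a v)"
    by (rule gdist_map_le) (use cone_retr_edge[OF C] in blast)
  moreover have "cone_retr a C (cone_emb a w) = w" if "w \<in> coneV C" for w
    using that by (auto simp: cone_retr_def coneV_def)
  ultimately show "gdist (Econe C) u v \<le> gdist Ec (cone_emb a u) (cone_emb a v)"
    using u v by simp
qed

lemma reach_from_copy_via_apex:
  "reach Ec y x n \<Longrightarrow> y = Inr (a, h) \<Longrightarrow> h \<in> C \<Longrightarrow> C \<in> comps \<Longrightarrow> x \<notin> Inr ` ({a} \<times> C)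
   \<Longrightarrow> \<exists>m<n. reach Ec (Inl a) x m"
proof (induction arbitrary: h rule: reach.induct)
  case (reach_refl u)
  then show ?case by auto
next
  case (reach_step u w v n)
  show ?case
  proof (cases w rule: sum_pair_cases)
    case (Inl b)
    then have "b = a" using reach_step by auto
    then show ?thesis using reach_step Inl by blast
  next
    case (Inr b h')
    then have "b = a" "EH h h'" using reach_step by auto
    then have "h' \<in> C" using component_closed reach_step by blast
    then obtain m where "m < n" "reach Ec (Inl a) v m"
      using reach_step.IH[of h'] Inr \<open>b = a\<close> reach_step.prems by blast
    then show ?thesis using less_SucI by blast
  qed
qed

lemma gdist_Inr_outside_copy:
  assumes a: "a \<in> VG" and C: "C \<in> comps" and h: "h \<in> C" and x: "x \<in> Vc"
    and outside: "x \<notin> Inr ` ({a} \<times> C)"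
  shows "gdist Ec (Inr (a, h)) x = Suc (gdist Ec (Inl a) x)"
proof (rule antisym)
  have hV: "h \<in> VH" using component_subset C h by blast
  obtain n where "reach Ec (Inl a) x n" using reach_corona[of "Inl a" x] a x by auto
  then have "reach Ec (Inl a) x (gdist Ec (Inl a) x)" by (rule reach_gdist)
  moreover have "Ec (Inr (a, h)) (Inl a)" using a hV by simp
  ultimately have "reach Ec (Inr (a, h)) x (Suc (gdist Ec (Inl a) x))" by (rule reach_step[rotated])
  then show "gdist Ec (Inr (a, h)) x \<le> Suc (gdist Ec (Inl a) x)" by (rule gdist_le)
  obtain n where "reach Ec (Inr (a, h)) x n" using reach_corona[of "Inr (a, h)" x] a hV x by auto
  then have "reach Ec (Inr (a, h)) x (gdist Ec (Inr (a, h)) x)" by (rule reach_gdist)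
  then obtain m where "m < gdist Ec (Inr (a, h)) x" "reach Ec (Inl a) x m"
    using reach_from_copy_via_apex h C outside by blast
  then show "Suc (gdist Ec (Inl a) x) \<le> gdist Ec (Inr (a, h)) x"
    using gdist_le[of Ec "Inl a" x m] by linarith
qed

lemma gdist_Inr_outside_cone_ge_2:
  assumes a: "a \<in> VG" and C: "C \<in> comps" and h: "h \<in> C" and x: "x \<in> Vc"
    and outside: "x \<notin> cone_emb a ` coneV C"
  shows "2 \<le> gdist Ec (Inr (a, h)) x"
proof -
  have "h \<in> VH" using component_subset C h by blast
  then obtain n where walk: "reach Ec (Inr (a, h)) x n"
    using reach_corona[of "Inr (a, h)" x] a x by auto
  moreover have "Inr (a, h) \<noteq> x" using outside h by (force simp: coneV_def)
  moreover have "\<not> Ec (Inr (a, h)) x"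
  proof
    assume e: "Ec (Inr (a, h)) x"
    show False
    proof (cases x rule: sum_pair_cases)
      case (Inl b)
      then show False using e outside by (auto simp: coneV_def)
    next
      case (Inr b h')
      then have "b = a" "h' \<in> C" using e component_closed C h by auto
      then show False using Inr outside by (force simp: coneV_def)
    qed
  qed
  ultimately show ?thesis by (rule gdist_ge_2)
qed

subsection \<open>Lower bound\<close>

lemma dist_class_cone_restriction:
  assumes a: "a \<in> VG" and C: "C \<in> comps" and h: "h \<in> C"
    and i: "i \<in> (c \<circ> cone_emb a) ` coneV C"
  shows "dist_class (coneV C) (Econe C) (c \<circ> cone_emb a) (Some h) i = dist_class Vc Ec c (Inr (a, h)) i"
proof -
  let ?d = "c \<circ> cone_emb a"
  let ?D = "dist_class (coneV C) (Econe C) ?d (Some h) i"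
  have sh: "Some h \<in> coneV C" using h by (simp add: coneV_def)
  obtain y1 where "y1 \<in> coneV C" "?d y1 = i" using i by blast
  then obtain y0 where y0: "y0 \<in> coneV C" "?d y0 = i" "gdist (Econe C) (Some h) y0 = ?D"
    and min: "\<And>y. y \<in> coneV C \<Longrightarrow> ?d y = i \<Longrightarrow> ?D \<le> gdist (Econe C) (Some h) y"
    by (rule dist_class_attained[where E = "Econe C" and v = "Some h"]) blast
  have "?D \<le> 2" using y0(3) gdist_cone_le_2[OF sh y0(1)] by simp
  show ?thesis
  proof (rule sym, rule dist_class_eqI[of "cone_emb a y0"])
    show "cone_emb a y0 \<in> Vc" using cone_emb_in_Vc a C y0 by blast
    show "c (cone_emb a y0) = i" using y0 by simp
    show "gdist Ec (Inr (a, h)) (cone_emb a y0) = ?D"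
      using gdist_cone_emb[OF a C sh y0(1)] y0(3) by simp
  next
    fix y assume y: "y \<in> Vc" "c y = i"
    show "?D \<le> gdist Ec (Inr (a, h)) y"
    proof (cases "y \<in> cone_emb a ` coneV C")
      case True
      then obtain w where w: "w \<in> coneV C" "y = cone_emb a w" by blast
      then have "?D \<le> gdist (Econe C) (Some h) w" using min y by simp
      then show ?thesis using gdist_cone_emb[OF a C sh w(1)] w by simp
    next
      case False
      then show ?thesis using gdist_Inr_outside_cone_ge_2[OF a C h y(1)] \<open>?D \<le> 2\<close> by linarith
    qed
  qed
qed

lemma dist_class_Inr_via_apex:
  assumes a: "a \<in> VG" and C: "C \<in> comps" and h: "h \<in> C"
    and i: "i \<in> c ` Vc" and absent: "i \<notin> c ` Inr ` ({a} \<times> C)"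
  shows "dist_class Vc Ec c (Inr (a, h)) i = Suc (dist_class Vc Ec c (Inl a) i)"
proof -
  obtain y1 where "y1 \<in> Vc" "c y1 = i" using i by blast
  then obtain x0 where x0: "x0 \<in> Vc" "c x0 = i" "gdist Ec (Inl a) x0 = dist_class Vc Ec c (Inl a) i"
    and min: "\<And>y. y \<in> Vc \<Longrightarrow> c y = i \<Longrightarrow> dist_class Vc Ec c (Inl a) i \<le> gdist Ec (Inl a) y"
    by (rule dist_class_attained[where E = Ec and v = "Inl a"]) blast
  have far: "gdist Ec (Inr (a, h)) y = Suc (gdist Ec (Inl a) y)" if "y \<in> Vc" "c y = i" for y
  proof (rule gdist_Inr_outside_copy[OF a C h that(1)])
    show "y \<notin> Inr ` ({a} \<times> C)" using absent that(2) by blast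
  qed
  show ?thesis
  proof (rule dist_class_eqI[of x0])
    show "gdist Ec (Inr (a, h)) x0 = Suc (dist_class Vc Ec c (Inl a) i)" using far x0 by simp
    show "Suc (dist_class Vc Ec c (Inl a) i) \<le> gdist Ec (Inr (a, h)) y" if "y \<in> Vc" "c y = i" for y
      using far[OF that] min[OF that] by simp
  qed (use x0 in auto)
qed

lemma locating_on_cone_restriction:
  assumes c: "locating_on Vc Ec c" and a: "a \<in> VG" and C: "C \<in> comps"
  shows "locating_on (coneV C) (Econe C) (c \<circ> cone_emb a)"
  unfolding locating_on_def
proof (intro conjI ballI impI)
  let ?d = "c \<circ> cone_emb a"
  have proper: "?d u \<noteq> ?d v" if "u \<in> coneV C" "v \<in> coneV C" "Econe C u v" for u v
    using locating_on_proper[OF c cone_emb_in_Vc[OF a C that(1)] cone_emb_in_Vc[OF a C that(2)]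
        cone_emb_edge[OF a C that(3)]] by simp
  then show "\<And>u v. u \<in> coneV C \<Longrightarrow> v \<in> coneV C \<Longrightarrow> Econe C u v \<Longrightarrow> ?d u \<noteq> ?d v" .
  fix u v assume u: "u \<in> coneV C" and v: "v \<in> coneV C" and "u \<noteq> v"
  show "\<exists>i\<in>?d ` coneV C. dist_class (coneV C) (Econe C) ?d u i \<noteq> dist_class (coneV C) (Econe C) ?d v i"
  proof (cases "?d u = ?d v")
    case False
    then show ?thesis using dist_class_own_color_neq[OF connected_graph_cone[OF C] u v] u by blast
  next
    case True
    have not_apex: "w \<noteq> None" if "w \<in> coneV C" "w' \<in> coneV C" "w \<noteq> w'" "?d w = ?d w'" for w w'
    proof
      assume "w = None"
      then have "Econe C w w'" using that by (auto simp: coneV_def)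
      then show False using proper that by blast
    qed
    obtain h where h: "u = Some h" "h \<in> C"
      using not_apex[OF u v \<open>u \<noteq> v\<close> True] u by (auto simp: coneV_def)
    obtain h' where h': "v = Some h'" "h' \<in> C"
      using not_apex[OF v u _ True[symmetric]] \<open>u \<noteq> v\<close> v by (auto simp: coneV_def)
    have distinct_in_Vc: "Inr (a, h) \<in> Vc" "Inr (a, h') \<in> Vc" "Inr (a, h) \<noteq> Inr (a, h')"
      using a component_subset[OF C] h h' \<open>u \<noteq> v\<close> by auto
    obtain i where i: "i \<in> c ` Vc"
      "dist_class Vc Ec c (Inr (a, h)) i \<noteq> dist_class Vc Ec c (Inr (a, h')) i"
      using locating_on_separates[OF c distinct_in_Vc] by blast
    have present: "i \<in> ?d ` coneV C"
    proof (rule ccontr)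
      assume "i \<notin> ?d ` coneV C"
      moreover have "c (Inr (a, b)) \<in> ?d ` coneV C" if "b \<in> C" for b
        using that by (intro image_eqI[of _ _ "Some b"]) (auto simp: coneV_def)
      ultimately have "i \<notin> c ` Inr ` ({a} \<times> C)" by blast
      then show False using i dist_class_Inr_via_apex[OF a C h(2) i(1)]
          dist_class_Inr_via_apex[OF a C h'(2) i(1)] by simp
    qed
    then have "dist_class (coneV C) (Econe C) ?d (Some h) i \<noteq> dist_class (coneV C) (Econe C) ?d (Some h') i"
      using i(2) dist_class_cone_restriction[OF a C h(2)] dist_class_cone_restriction[OF a C h'(2)]
      by simp
    then show ?thesis using present h h' by blast
  qed
qed

lemma chi_L_cone_le_corona:
  assumes C: "C \<in> comps"
  shows "chi_L (coneV C) (Econe C) \<le> chi_L Vc Ec"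
proof -
  obtain c where c: "locating_coloring Vc Ec c (chi_L Vc Ec)"
    using locating_coloring_chi_L[OF connected_graph_corona] by blast
  then have colors: "c ` Vc = {1..chi_L Vc Ec}"
    unfolding locating_coloring_def coloring_def by blast
  obtain a where a: "a \<in> VG" using VG_nonempty by blast
  have "chi_L (coneV C) (Econe C) \<le> card ((c \<circ> cone_emb a) ` coneV C)"
    using connected_graph_finite[OF connected_graph_cone[OF C]]
      locating_on_cone_restriction[OF locating_coloring_imp_locating_on[OF c] a C]
    by (rule chi_L_le_card_image)
  also have "\<dots> \<le> card (c ` Vc)"
    using cone_emb_in_Vc[OF a C] colors by (intro card_mono) auto
  finally show ?thesis using colors by simp
qed

end

subsection \<open>Upper bound\<close>

locale corona_coloring = corona VG EG VH EH
  for VG :: "'a set" and EG and VH :: "'b set" and EH +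
  fixes cG :: "'a \<Rightarrow> nat" and kG :: nat and cc :: "'b set \<Rightarrow> 'b option \<Rightarrow> nat"
    and kc :: "'b set \<Rightarrow> nat" and idx :: "'b set \<Rightarrow> nat"
  assumes cG: "locating_coloring VG EG cG kG"
    and cc: "\<And>C. C \<in> components VH EH
      \<Longrightarrow> locating_coloring (coneV C) (coneE C (induced EH C)) (cc C) (kc C)"
    and idx: "inj_on idx (components VH EH)"
begin

definition palette :: "'b set \<Rightarrow> nat \<Rightarrow> nat" where
  "palette C j = kG + 1 + prod_encode (idx C, j)"

definition col :: "'a + 'a \<times> 'b \<Rightarrow> nat" where
  "col x = (case x of Inl a \<Rightarrow> cG a
     | Inr (a, h) \<Rightarrow> palette (component_of h) (cc (component_of h) (Some h)))"

lemma palette_inj: "C \<in> comps \<Longrightarrow> C' \<in> comps \<Longrightarrow> palette C j = palette C' j' \<Longrightarrow> C = C' \<and> j = j'"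
  using idx unfolding palette_def by (auto dest: inj_onD)

lemma palette_gt: "kG < palette C j"
  unfolding palette_def by simp

lemma cG_image: "cG ` VG = {1..kG}"
  using cG unfolding locating_coloring_def coloring_def by blast

lemma cG_le: "a \<in> VG \<Longrightarrow> cG a \<le> kG"
  using cG_image by auto

lemma cc_image: "C \<in> comps \<Longrightarrow> cc C ` coneV C = {1..kc C}"
  using cc unfolding locating_coloring_def coloring_def by blast

lemma cc_locating: "C \<in> comps \<Longrightarrow> locating_on (coneV C) (Econe C) (cc C)"
  using cc by (rule locating_coloring_imp_locating_on)

lemma cc_Some_neq_None: "C \<in> comps \<Longrightarrow> h \<in> C \<Longrightarrow> cc C (Some h) \<noteq> cc C None"
  using locating_on_proper[OF cc_locating, of C "Some h" None] by (simp add: coneV_def)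

lemma col_Inl [simp]: "col (Inl a) = cG a"
  by (simp add: col_def)

lemma col_Inr: "C \<in> comps \<Longrightarrow> h \<in> C \<Longrightarrow> col (Inr (a, h)) = palette C (cc C (Some h))"
  using component_eq by (simp add: col_def)

lemma col_Inr_component:
  assumes "Inr (a, h) \<in> Vc"
  obtains C where "C \<in> comps" "h \<in> C" "col (Inr (a, h)) = palette C (cc C (Some h))"
proof -
  have "h \<in> VH" using assms by simp
  then show ?thesis using that component_of_mem col_Inr by blast
qed

lemma col_Inr_gt: "Inr (a, h) \<in> Vc \<Longrightarrow> kG < col (Inr (a, h))"
  by (metis col_Inr_component palette_gt)

lemma G_colors_subset: "{1..kG} \<subseteq> col ` Vc"
proof
  fix i assume "i \<in> {1..kG}"
  then obtain a where "a \<in> VG" "cG a = i" using cG_image by (metis imageE)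
  then show "i \<in> col ` Vc" by (intro image_eqI[of _ _ "Inl a"]) simp_all
qed

lemma palette_in_col_image:
  assumes a: "a \<in> VG" and C: "C \<in> comps" and j: "j \<in> cc C ` coneV C" and jn: "j \<noteq> cc C None"
  shows "palette C j \<in> col ` Vc"
proof -
  obtain y where "y \<in> coneV C" "cc C y = j" using j by blast
  then obtain h where "h \<in> C" "cc C (Some h) = j" using jn by (auto simp: coneV_def)
  moreover have "Inr (a, h) \<in> Vc" using a component_subset[OF C] \<open>h \<in> C\<close> by auto
  ultimately show ?thesis using col_Inr[OF C] by (metis image_eqI)
qed

lemma dist_class_col_Inl:
  assumes a: "a \<in> VG" and i: "i \<in> {1..kG}"
  shows "dist_class Vc Ec col (Inl a) i = dist_class VG EG cG a i"
proof -
  obtain y1 where "y1 \<in> VG" "cG y1 = i" using i cG_image by (metis imageE)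
  then obtain y0 where y0: "y0 \<in> VG" "cG y0 = i" "gdist EG a y0 = dist_class VG EG cG a i"
    and min: "\<And>y. y \<in> VG \<Longrightarrow> cG y = i \<Longrightarrow> dist_class VG EG cG a i \<le> gdist EG a y"
    by (rule dist_class_attained[where E = EG and v = a]) blast
  show ?thesis
  proof (rule dist_class_eqI[of "Inl y0"])
    show "gdist Ec (Inl a) (Inl y0) = dist_class VG EG cG a i"
      using gdist_Inl_Inl[OF a y0(1)] y0(3) by simp
  next
    fix y assume y: "y \<in> Vc" "col y = i"
    show "dist_class VG EG cG a i \<le> gdist Ec (Inl a) y"
    proof (cases y rule: sum_pair_cases)
      case (Inl b)
      then show ?thesis using y min[of b] gdist_Inl_Inl[OF a, of b] by simp
    next
      case (Inr b h)
      then have "kG < col y" using col_Inr_gt y(1) by simp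
      then show ?thesis using y(2) i by simp
    qed
  qed (use y0 in auto)
qed

lemma dist_class_col_Inr_G_color:
  assumes a: "a \<in> VG" and h: "h \<in> VH" and i: "i \<in> {1..kG}"
  shows "dist_class Vc Ec col (Inr (a, h)) i = Suc (dist_class VG EG cG a i)"
proof -
  obtain C where C: "C \<in> comps" "h \<in> C" using component_of_mem h by blast
  have "kG < col (Inr (a, b))" if "b \<in> C" for b
    using col_Inr[OF C(1) that] palette_gt by simp
  then have "i \<notin> col ` Inr ` ({a} \<times> C)" using i by fastforce
  then show ?thesis
    using dist_class_Inr_via_apex[OF a C] G_colors_subset i dist_class_col_Inl[OF a i] by auto
qed

lemma dist_class_cone_apex_color:
  assumes C: "C \<in> comps" and h: "h \<in> C"
  shows "dist_class (coneV C) (Econe C) (cc C) (Some h) (cc C None) = 1"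
proof (rule dist_class_eqI[of None])
  have e: "Econe C (Some h) None" using h by simp
  have "1 \<le> gdist (Econe C) (Some h) None" using gdist_pos[OF reach_edge[of "Econe C", OF e]] by simp
  then show "gdist (Econe C) (Some h) None = 1" using gdist_edge_le[of "Econe C", OF e] by linarith
next
  fix y assume y: "y \<in> coneV C" "cc C y = cc C None"
  have "Some h \<in> coneV C" using h by (simp add: coneV_def)
  then obtain n where "reach (Econe C) (Some h) y n"
    using connected_graph_reach[OF connected_graph_cone[OF C]] y(1) by blast
  moreover have "y \<noteq> Some h" using cc_Some_neq_None[OF C h] y(2) by auto
  ultimately show "1 \<le> gdist (Econe C) (Some h) y" using gdist_pos by metis
qed (simp_all add: coneV_def)

lemma dist_class_col_palette:
  assumes a: "a \<in> VG" and C: "C \<in> comps" and h: "h \<in> C"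
    and j: "j \<in> cc C ` coneV C" and jn: "j \<noteq> cc C None"
  shows "dist_class Vc Ec col (Inr (a, h)) (palette C j)
       = dist_class (coneV C) (Econe C) (cc C) (Some h) j"
proof -
  have same_class: "(col \<circ> cone_emb a) y = palette C j \<longleftrightarrow> cc C y = j" if "y \<in> coneV C" for y
  proof (cases y)
    case None
    then show ?thesis using jn cG_le[OF a] palette_gt[of C j] by auto
  next
    case (Some h')
    then have "h' \<in> C" using that by (auto simp: coneV_def)
    then show ?thesis using Some col_Inr[OF C] palette_inj[OF C C] by auto
  qed
  obtain y where y: "y \<in> coneV C" "cc C y = j" using j by blast
  then have "palette C j \<in> (col \<circ> cone_emb a) ` coneV C"
    using same_class[OF y(1)] by (intro image_eqI[of _ _ y]) auto
  then have "dist_class Vc Ec col (Inr (a, h)) (palette C j)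
      = dist_class (coneV C) (Econe C) (col \<circ> cone_emb a) (Some h) (palette C j)"
    using dist_class_cone_restriction[OF a C h] by simp
  also have "\<dots> = dist_class (coneV C) (Econe C) (cc C) (Some h) j"
    using same_class by (rule dist_class_cong)
  finally show ?thesis .
qed

lemma col_proper:
  assumes u: "u \<in> Vc" and v: "v \<in> Vc" and e: "Ec u v"
  shows "col u \<noteq> col v"
proof (cases u rule: sum_pair_cases)
  case (Inl a)
  show ?thesis
  proof (cases v rule: sum_pair_cases)
    case (Inl b)
    then show ?thesis
      using \<open>u = Inl a\<close> u v e locating_on_proper[OF locating_coloring_imp_locating_on[OF cG]] by simp
  next
    case (Inr b h)
    then show ?thesis using \<open>u = Inl a\<close> u v cG_le col_Inr_gt by fastforce
  qed
next
  case (Inr a h)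
  show ?thesis
  proof (cases v rule: sum_pair_cases)
    case (Inl b)
    then show ?thesis using \<open>u = Inr (a, h)\<close> u v cG_le col_Inr_gt by fastforce
  next
    case (Inr b h')
    then have "EH h h'" using \<open>u = Inr (a, h)\<close> e by simp
    obtain C where C: "C \<in> comps" "h \<in> C" "col u = palette C (cc C (Some h))"
      using u \<open>u = Inr (a, h)\<close> col_Inr_component by blast
    then have "h' \<in> C" using component_closed \<open>EH h h'\<close> by blast
    have "cc C (Some h) \<noteq> cc C (Some h')"
      using locating_on_proper[OF cc_locating[OF C(1)], of "Some h" "Some h'"] C(2) \<open>h' \<in> C\<close> \<open>EH h h'\<close>
      by (simp add: coneV_def induced_def)
    then show ?thesis using C col_Inr[OF C(1) \<open>h' \<in> C\<close>] palette_inj[OF C(1) C(1)] Inr by auto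
  qed
qed

lemma cG_separates:
  "a \<in> VG \<Longrightarrow> b \<in> VG \<Longrightarrow> a \<noteq> b \<Longrightarrow> \<exists>i\<in>{1..kG}. dist_class VG EG cG a i \<noteq> dist_class VG EG cG b i"
  using cG unfolding locating_coloring_def by blast

lemma col_separates_Inl:
  assumes "a \<in> VG" "b \<in> VG" "a \<noteq> b"
  shows "\<exists>i\<in>col ` Vc. dist_class Vc Ec col (Inl a) i \<noteq> dist_class Vc Ec col (Inl b) i"
proof -
  obtain i where i: "i \<in> {1..kG}" "dist_class VG EG cG a i \<noteq> dist_class VG EG cG b i"
    using cG_separates[OF assms] by blast
  then have "dist_class Vc Ec col (Inl a) i \<noteq> dist_class Vc Ec col (Inl b) i"
    using dist_class_col_Inl assms(1,2) by simp
  then show ?thesis using i(1) G_colors_subset by blast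
qed

lemma col_separates_Inr_bases:
  assumes "a \<in> VG" "b \<in> VG" "h \<in> VH" "h' \<in> VH" "a \<noteq> b"
  shows "\<exists>i\<in>col ` Vc. dist_class Vc Ec col (Inr (a, h)) i \<noteq> dist_class Vc Ec col (Inr (b, h')) i"
proof -
  obtain i where i: "i \<in> {1..kG}" "dist_class VG EG cG a i \<noteq> dist_class VG EG cG b i"
    using cG_separates assms(1,2,5) by blast
  then have "dist_class Vc Ec col (Inr (a, h)) i \<noteq> dist_class Vc Ec col (Inr (b, h')) i"
    using dist_class_col_Inr_G_color assms(1-4) by simp
  then show ?thesis using i(1) G_colors_subset by blast
qed

lemma col_separates_Inr_copy:
  assumes a: "a \<in> VG" and C: "C \<in> comps" and h: "h \<in> C" "h' \<in> C" "h \<noteq> h'"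
  shows "\<exists>i\<in>col ` Vc. dist_class Vc Ec col (Inr (a, h)) i \<noteq> dist_class Vc Ec col (Inr (a, h')) i"
proof -
  have "Some h \<in> coneV C" "Some h' \<in> coneV C" "Some h \<noteq> Some h'" using h by (auto simp: coneV_def)
  then obtain j where j: "j \<in> cc C ` coneV C"
    "dist_class (coneV C) (Econe C) (cc C) (Some h) j \<noteq> dist_class (coneV C) (Econe C) (cc C) (Some h') j"
    using locating_on_separates[OF cc_locating[OF C]] by blast
  moreover have jn: "j \<noteq> cc C None"
    using j(2) dist_class_cone_apex_color[OF C h(1)] dist_class_cone_apex_color[OF C h(2)] by auto
  ultimately have "dist_class Vc Ec col (Inr (a, h)) (palette C j) \<noteq> dist_class Vc Ec col (Inr (a, h')) (palette C j)"
    using dist_class_col_palette[OF a C h(1)] dist_class_col_palette[OF a C h(2)] by simp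
  then show ?thesis using palette_in_col_image[OF a C j(1) jn] by blast
qed

lemma col_separates:
  assumes u: "u \<in> Vc" and v: "v \<in> Vc" and "u \<noteq> v"
  shows "\<exists>i\<in>col ` Vc. dist_class Vc Ec col u i \<noteq> dist_class Vc Ec col v i"
proof (cases "col u = col v")
  case False
  then show ?thesis using dist_class_own_color_neq[OF connected_graph_corona u v] u by blast
next
  case True
  show ?thesis
  proof (cases u rule: sum_pair_cases)
    case (Inl a)
    then obtain b where "v = Inl b"
      using True u v cG_le col_Inr_gt by (cases v rule: sum_pair_cases) fastforce+
    then show ?thesis using col_separates_Inl Inl u v \<open>u \<noteq> v\<close> by simp
  next
    case (Inr a h)
    then obtain b h' where v_Inr: "v = Inr (b, h')"
      using True u v cG_le col_Inr_gt by (cases v rule: sum_pair_cases) fastforce+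
    show ?thesis
    proof (cases "a = b")
      case True
      obtain C where C: "C \<in> comps" "h \<in> C" "col u = palette C (cc C (Some h))"
        using u Inr col_Inr_component by blast
      obtain C' where C': "C' \<in> comps" "h' \<in> C'" "col v = palette C' (cc C' (Some h'))"
        using v v_Inr col_Inr_component by blast
      have "palette C (cc C (Some h)) = palette C' (cc C' (Some h'))"
        using C(3) C'(3) \<open>col u = col v\<close> by simp
      then have "C' = C" using palette_inj[OF C(1) C'(1)] by blast
      then show ?thesis
        using col_separates_Inr_copy[of a C h h'] u C C' Inr v_Inr True \<open>u \<noteq> v\<close> by simp
    next
      case False
      then show ?thesis using col_separates_Inr_bases u v Inr v_Inr by simp
    qed
  qed
qed

lemma locating_on_col: "locating_on Vc Ec col"
  unfolding locating_on_def using col_proper col_separates by blast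

lemma card_col_image_le: "card (col ` Vc) \<le> kG + (\<Sum>C\<in>comps. kc C - 1)"
proof -
  let ?P = "\<lambda>C. palette C ` ({1..kc C} - {cc C None})"
  have "col ` Vc \<subseteq> cG ` VG \<union> (\<Union>C\<in>comps. ?P C)"
  proof
    fix x assume "x \<in> col ` Vc"
    then obtain y where y: "y \<in> Vc" "x = col y" by blast
    show "x \<in> cG ` VG \<union> (\<Union>C\<in>comps. ?P C)"
    proof (cases y rule: sum_pair_cases)
      case (Inl a)
      then show ?thesis using y by simp
    next
      case (Inr a h)
      then obtain C where C: "C \<in> comps" "h \<in> C" "col y = palette C (cc C (Some h))"
        using y col_Inr_component by blast
      have "cc C (Some h) \<in> {1..kc C} - {cc C None}"
        using cc_image[OF C(1)] cc_Some_neq_None[OF C(1,2)] C(2) by (auto simp: coneV_def)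
      then show ?thesis using y C by blast
    qed
  qed
  then have "card (col ` Vc) \<le> card (cG ` VG \<union> (\<Union>C\<in>comps. ?P C))"
    using finite_components finite_VG by (intro card_mono) auto
  also have "\<dots> \<le> card (cG ` VG) + card (\<Union>C\<in>comps. ?P C)" by (rule card_Un_le)
  also have "card (\<Union>C\<in>comps. ?P C) \<le> (\<Sum>C\<in>comps. card (?P C))"
    using finite_components by (rule card_UN_le)
  also have "\<dots> \<le> (\<Sum>C\<in>comps. kc C - 1)"
  proof (rule sum_mono)
    fix C assume C: "C \<in> comps"
    have "cc C None \<in> {1..kc C}" using cc_image[OF C] by (auto simp: coneV_def)
    then have "card ({1..kc C} - {cc C None}) = kc C - 1" by simp
    then show "card (?P C) \<le> kc C - 1" using card_image_le[of _ "palette C"] by (metis finite_Diff finite_atLeastAtMost)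
  qed
  finally show ?thesis using cG_image by simp
qed

lemma chi_L_corona_le: "chi_L Vc Ec \<le> kG + (\<Sum>C\<in>comps. kc C - 1)"
  using chi_L_le_card_image[OF connected_graph_finite[OF connected_graph_corona] locating_on_col]
    card_col_image_le by linarith

end

theorem theorem1:
  fixes VG :: "'a set" and EG :: "'a \<Rightarrow> 'a \<Rightarrow> bool"
    and VH :: "'b set" and EH :: "'b \<Rightarrow> 'b \<Rightarrow> bool"
  assumes "connected_graph VG EG" and "card VG \<ge> 2"
    and "simple_graph VH EH" and "VH \<noteq> {}"
  shows "Max ((\<lambda>C. chi_L (coneV C) (coneE C (induced EH C))) ` components VH EH)
           \<le> chi_L (coronaV VG VH) (coronaE VG EG VH EH)
       \<and> chi_L (coronaV VG VH) (coronaE VG EG VH EH)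
           \<le> chi_L VG EG + (\<Sum>C\<in>components VH EH. chi_L (coneV C) (coneE C (induced EH C)) - 1)"
proof
  interpret corona VG EG VH EH using assms(1,3) by unfold_locales
  show "Max ((\<lambda>C. chi_L (coneV C) (Econe C)) ` comps) \<le> chi_L Vc Ec"
    using finite_components components_nonempty[OF assms(4)] chi_L_cone_le_corona by simp
  obtain cG where cG: "locating_coloring VG EG cG (chi_L VG EG)"
    using locating_coloring_chi_L[OF assms(1)] by blast
  obtain cc where cc: "\<And>C. C \<in> comps \<Longrightarrow> locating_coloring (coneV C) (Econe C) (cc C) (chi_L (coneV C) (Econe C))"
    using locating_coloring_chi_L[OF connected_graph_cone] by metis
  obtain idx :: "'b set \<Rightarrow> nat" where "inj_on idx comps"
    using finite_imp_inj_to_nat_seg[OF finite_components] by blast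
  then interpret corona_coloring VG EG VH EH cG "chi_L VG EG" cc "\<lambda>C. chi_L (coneV C) (Econe C)" idx
    using cG cc by unfold_locales
  show "chi_L Vc Ec \<le> chi_L VG EG + (\<Sum>C\<in>comps. chi_L (coneV C) (Econe C) - 1)"
    by (rule chi_L_corona_le)
qed

end
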